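(* Let $H\subset\mathbb{R}$ be a non-trivial rank one subgroup. The semiring $\mathcal R_H$ of germs at $\lambda=1$ of $\mathbb{R}_{\max}$-valued, piecewise affine, continuous convex functions $f(\lambda)$ with slopes in $H$ (with operations pointwise max and pointwise $+$) is multiplicatively cancellative, and its semifield of fractions $\mathrm{Frac}\,\mathcal R_H$ is (isomorphic to) the semifield of germs at $\lambda=1$ of $\mathbb{R}_{\max}$-valued, piecewise affine, continuous functions $f(\lambda)$ with slopes in $H$, endowed with the operations of pointwise max and pointwise addition of germs.
   Context: $\mathbb{R}_{\max}=\mathbb{R}\cup\{-\infty\}$ with "addition" $\max$ and "multiplication" $+$. A rank one subgroup of $\mathbb{R}$ is one isomorphic to a non-zero subgroup of $\mathbb{Q}$. The germ of the constant function $-\infty$ is the zero element; multiplicatively cancellative means $f+h=g+h$ with $h\neq-\infty$ implies $f=g$. *)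

theory Defs
  imports "HOL-Analysis.Analysis" "HOL-Library.Extended_Real"
begin

text \<open>R_max-valued functions are modelled as functions real \<Rightarrow> ereal that never
  take the value +\<infinity> (guaranteed by the membership predicates below);
  max is the "addition", + the "multiplication", \<lambda>_. -\<infinity> is the zero.\<close>

definition add_subgroup :: "real set \<Rightarrow> bool" where
  "add_subgroup H \<longleftrightarrow> 0 \<in> H \<and> (\<forall>x\<in>H. \<forall>y\<in>H. x + y \<in> H) \<and> (\<forall>x\<in>H. - x \<in> H)"

definition rank_one_subgroup :: "real set \<Rightarrow> bool" where
  "rank_one_subgroup H \<longleftrightarrow> add_subgroup H \<and> H \<noteq> {0} \<and>
     (\<exists>\<psi> :: real \<Rightarrow> rat. inj_on \<psi> H \<and> (\<forall>x\<in>H. \<forall>y\<in>H. \<psi> (x + y) = \<psi> x + \<psi> y))"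

definition pw_affine_slopes_on :: "real set \<Rightarrow> real \<Rightarrow> real \<Rightarrow> (real \<Rightarrow> real) \<Rightarrow> bool" where
  "pw_affine_slopes_on H a b g \<longleftrightarrow>
     (\<exists>S. finite S \<and>
        (\<forall>x y. a \<le> x \<and> x < y \<and> y \<le> b \<and> {x<..<y} \<inter> S = {} \<longrightarrow>
           (\<exists>s\<in>H. \<exists>c. \<forall>t\<in>{x..y}. g t = s * t + c)))"

text \<open>Representatives of germs at 1 of R_max-valued, piecewise affine, continuous functions
  with slopes in H (by continuity such a function is, near 1, either identically -\<infinity>
  or real valued).\<close>
definition PL_fun :: "real set \<Rightarrow> (real \<Rightarrow> ereal) \<Rightarrow> bool" where
  "PL_fun H f \<longleftrightarrow> (\<exists>\<epsilon>>0.
      (\<forall>t\<in>{1-\<epsilon>..1+\<epsilon>}. f t = -\<infinity>) \<or>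
      (\<exists>g. pw_affine_slopes_on H (1-\<epsilon>) (1+\<epsilon>) g \<and> continuous_on {1-\<epsilon>..1+\<epsilon>} g \<and>
           (\<forall>t\<in>{1-\<epsilon>..1+\<epsilon>}. f t = ereal (g t))))"

definition PL_convex_fun :: "real set \<Rightarrow> (real \<Rightarrow> ereal) \<Rightarrow> bool" where
  "PL_convex_fun H f \<longleftrightarrow> (\<exists>\<epsilon>>0.
      (\<forall>t\<in>{1-\<epsilon>..1+\<epsilon>}. f t = -\<infinity>) \<or>
      (\<exists>g. pw_affine_slopes_on H (1-\<epsilon>) (1+\<epsilon>) g \<and> continuous_on {1-\<epsilon>..1+\<epsilon>} g \<and>
           convex_on {1-\<epsilon>..1+\<epsilon>} g \<and>
           (\<forall>t\<in>{1-\<epsilon>..1+\<epsilon>}. f t = ereal (g t))))"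

definition germ_eq :: "(real \<Rightarrow> ereal) \<Rightarrow> (real \<Rightarrow> ereal) \<Rightarrow> bool" where
  "germ_eq f g \<longleftrightarrow> eventually (\<lambda>t. f t = g t) (nhds 1)"

definition germ_add :: "(real \<Rightarrow> ereal) \<Rightarrow> (real \<Rightarrow> ereal) \<Rightarrow> real \<Rightarrow> ereal" where
  "germ_add f g = (\<lambda>t. max (f t) (g t))"

definition germ_mult :: "(real \<Rightarrow> ereal) \<Rightarrow> (real \<Rightarrow> ereal) \<Rightarrow> real \<Rightarrow> ereal" where
  "germ_mult f g = (\<lambda>t. f t + g t)"

definition germ_zero :: "real \<Rightarrow> ereal" where
  "germ_zero = (\<lambda>_. -\<infinity>)"

definition mult_cancellative :: "((real \<Rightarrow> ereal) \<Rightarrow> bool) \<Rightarrow> bool" where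
  "mult_cancellative A \<longleftrightarrow>
     (\<forall>f g h. A f \<longrightarrow> A g \<longrightarrow> A h \<longrightarrow> \<not> germ_eq h germ_zero \<longrightarrow>
        germ_eq (germ_mult f h) (germ_mult g h) \<longrightarrow> germ_eq f g)"

definition frac_carrier :: "((real \<Rightarrow> ereal) \<Rightarrow> bool) \<Rightarrow> ((real \<Rightarrow> ereal) \<times> (real \<Rightarrow> ereal)) set" where
  "frac_carrier A = {(a, b). A a \<and> A b \<and> \<not> germ_eq b germ_zero}"

definition frac_eq :: "((real \<Rightarrow> ereal) \<times> (real \<Rightarrow> ereal)) \<Rightarrow> ((real \<Rightarrow> ereal) \<times> (real \<Rightarrow> ereal)) \<Rightarrow> bool" where
  "frac_eq p q \<longleftrightarrow> germ_eq (germ_mult (fst p) (snd q)) (germ_mult (fst q) (snd p))"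

definition frac_add :: "((real \<Rightarrow> ereal) \<times> (real \<Rightarrow> ereal)) \<Rightarrow> ((real \<Rightarrow> ereal) \<times> (real \<Rightarrow> ereal)) \<Rightarrow> ((real \<Rightarrow> ereal) \<times> (real \<Rightarrow> ereal))" where
  "frac_add p q = (germ_add (germ_mult (fst p) (snd q)) (germ_mult (fst q) (snd p)),
                   germ_mult (snd p) (snd q))"

definition frac_mult :: "((real \<Rightarrow> ereal) \<times> (real \<Rightarrow> ereal)) \<Rightarrow> ((real \<Rightarrow> ereal) \<times> (real \<Rightarrow> ereal)) \<Rightarrow> ((real \<Rightarrow> ereal) \<times> (real \<Rightarrow> ereal))" where
  "frac_mult p q = (germ_mult (fst p) (fst q), germ_mult (snd p) (snd q))"

definition frac_iso :: "((real \<Rightarrow> ereal) \<Rightarrow> bool) \<Rightarrow> ((real \<Rightarrow> ereal) \<Rightarrow> bool)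
    \<Rightarrow> ((real \<Rightarrow> ereal) \<times> (real \<Rightarrow> ereal) \<Rightarrow> (real \<Rightarrow> ereal)) \<Rightarrow> bool" where
  "frac_iso A B \<phi> \<longleftrightarrow>
     (\<forall>p\<in>frac_carrier A. B (\<phi> p)) \<and>
     (\<forall>p\<in>frac_carrier A. \<forall>q\<in>frac_carrier A. germ_eq (\<phi> p) (\<phi> q) \<longleftrightarrow> frac_eq p q) \<and>
     (\<forall>f. B f \<longrightarrow> (\<exists>p\<in>frac_carrier A. germ_eq (\<phi> p) f)) \<and>
     (\<forall>p\<in>frac_carrier A. \<forall>q\<in>frac_carrier A.
        germ_eq (\<phi> (frac_add p q)) (germ_add (\<phi> p) (\<phi> q)) \<and>
        germ_eq (\<phi> (frac_mult p q)) (germ_mult (\<phi> p) (\<phi> q)))"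

end

theory Submission
  imports Defs
begin

text \<open>Near \<open>1\<close> a real-valued piecewise affine germ with slopes in \<open>H\<close> has a single
  possible break point, at \<open>1\<close> itself, so it is \<open>c + s (t - 1) + k max (t - 1) 0\<close> with
  \<open>s, k \<in> H\<close>. Splitting \<open>k = max k 0 - max (-k) 0\<close> writes it as a difference of two convex
  such germs; hence the map \<open>(a, b) \<mapsto> a - b\<close> from fractions to germs is onto. Non-zero convex
  germs are real valued near \<open>1\<close>, and finite summands cancel in \<open>ereal\<close>, which gives
  cancellativity and makes the map well defined, injective and compatible with the operations.\<close>

lemma eventually_nhds_real_Icc:
  fixes x e :: real
  assumes "e > 0" "\<forall>t\<in>{x-e..x+e}. P t"
  shows "eventually P (nhds x)"
  unfolding eventually_nhds_metric
  using assms by (intro exI[of _ e]) (auto simp: dist_real_def abs_if split: if_splits)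

lemma not_germ_eq_ereal_zero: "\<not> germ_eq (\<lambda>t. ereal (g t)) germ_zero"
  unfolding germ_eq_def germ_zero_def by simp

lemma add_subgroup_diff: "add_subgroup H \<Longrightarrow> x \<in> H \<Longrightarrow> y \<in> H \<Longrightarrow> x - y \<in> H"
  unfolding add_subgroup_def by (metis diff_conv_add_uminus)

lemma add_subgroup_max_zero: "add_subgroup H \<Longrightarrow> x \<in> H \<Longrightarrow> max x 0 \<in> H"
  unfolding add_subgroup_def max_def by simp

lemma ereal_diff_eq_diff_iff:
  fixes a b c d :: ereal
  assumes "\<bar>b\<bar> \<noteq> \<infinity>" "\<bar>d\<bar> \<noteq> \<infinity>"
  shows "a - b = c - d \<longleftrightarrow> a + d = c + b"
  using assms by (cases a; cases b; cases c; cases d) (auto simp: algebra_simps)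

lemma ereal_max_add_diff:
  fixes a b c d :: ereal
  assumes "\<bar>b\<bar> \<noteq> \<infinity>" "\<bar>d\<bar> \<noteq> \<infinity>"
  shows "max (a + d) (c + b) - (b + d) = max (a - b) (c - d)"
  using assms by (cases a; cases b; cases c; cases d) (auto simp: max_def algebra_simps)

lemma ereal_add_diff_add:
  fixes a b c d :: ereal
  assumes "a \<noteq> \<infinity>" "c \<noteq> \<infinity>" "\<bar>b\<bar> \<noteq> \<infinity>" "\<bar>d\<bar> \<noteq> \<infinity>"
  shows "(a + c) - (b + d) = (a - b) + (c - d)"
  using assms by (cases a; cases b; cases c; cases d) (auto simp: algebra_simps)

lemma pw_affine_slopes_on_subinterval:
  "pw_affine_slopes_on H a b g \<Longrightarrow> a \<le> a' \<Longrightarrow> b' \<le> b \<Longrightarrow> pw_affine_slopes_on H a' b' g"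
  unfolding pw_affine_slopes_on_def by (meson order_trans)

lemma pw_affine_slopes_on_diff:
  assumes H: "add_subgroup H"
    and g1: "pw_affine_slopes_on H a b g1" and g2: "pw_affine_slopes_on H a b g2"
  shows "pw_affine_slopes_on H a b (\<lambda>t. g1 t - g2 t)"
proof -
  obtain S1 where S1: "finite S1" "\<And>x y. a \<le> x \<Longrightarrow> x < y \<Longrightarrow> y \<le> b \<Longrightarrow> {x<..<y} \<inter> S1 = {} \<Longrightarrow>
      \<exists>s\<in>H. \<exists>c. \<forall>t\<in>{x..y}. g1 t = s * t + c"
    using g1 unfolding pw_affine_slopes_on_def by blast
  obtain S2 where S2: "finite S2" "\<And>x y. a \<le> x \<Longrightarrow> x < y \<Longrightarrow> y \<le> b \<Longrightarrow> {x<..<y} \<inter> S2 = {} \<Longrightarrow>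
      \<exists>s\<in>H. \<exists>c. \<forall>t\<in>{x..y}. g2 t = s * t + c"
    using g2 unfolding pw_affine_slopes_on_def by blast
  show ?thesis unfolding pw_affine_slopes_on_def
  proof (intro exI[of _ "S1 \<union> S2"] conjI allI impI)
    fix x y assume xy: "a \<le> x \<and> x < y \<and> y \<le> b \<and> {x<..<y} \<inter> (S1 \<union> S2) = {}"
    then obtain s1 c1 s2 c2 where "s1 \<in> H" "\<forall>t\<in>{x..y}. g1 t = s1 * t + c1"
      and "s2 \<in> H" "\<forall>t\<in>{x..y}. g2 t = s2 * t + c2"
      using S1(2)[of x y] S2(2)[of x y] by blast
    then show "\<exists>s\<in>H. \<exists>c. \<forall>t\<in>{x..y}. g1 t - g2 t = s * t + c"
      using add_subgroup_diff[OF H] by (intro bexI[of _ "s1 - s2"] exI[of _ "c1 - c2"])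
        (auto simp: algebra_simps)
  qed (use S1 S2 in simp)
qed

definition hinge :: "real \<Rightarrow> real \<Rightarrow> real \<Rightarrow> real \<Rightarrow> real" where
  "hinge c s k t = c + s * (t - 1) + k * max (t - 1) 0"

lemma hinge_left: "t \<le> 1 \<Longrightarrow> hinge c s k t = s * t + (c - s)"
  unfolding hinge_def by (simp add: algebra_simps)

lemma hinge_right: "1 \<le> t \<Longrightarrow> hinge c s k t = (s + k) * t + (c - s - k)"
  unfolding hinge_def by (simp add: algebra_simps)

lemma hinge_split: "hinge c s k t = hinge c s (max k 0) t - hinge 0 0 (max (- k) 0) t"
  unfolding hinge_def by (simp add: max_def algebra_simps)

lemma convex_on_max:
  fixes f g :: "'a::real_vector \<Rightarrow> real"
  assumes "convex_on S f" "convex_on S g"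
  shows "convex_on S (\<lambda>x. max (f x) (g x))"
proof (rule convex_onI)
  show "convex S" using assms(1) by (rule convex_on_imp_convex)
  fix u :: real and x y assume u: "0 < u" "u < 1" and xy: "x \<in> S" "y \<in> S"
  have "f ((1 - u) *\<^sub>R x + u *\<^sub>R y) \<le> (1 - u) * f x + u * f y"
    "g ((1 - u) *\<^sub>R x + u *\<^sub>R y) \<le> (1 - u) * g x + u * g y"
    using u xy assms by (auto intro: convex_onD)
  moreover have "(1 - u) * f x + u * f y \<le> (1 - u) * max (f x) (g x) + u * max (f y) (g y)"
    "(1 - u) * g x + u * g y \<le> (1 - u) * max (f x) (g x) + u * max (f y) (g y)"
    using u by (intro add_mono mult_left_mono; simp)+
  ultimately show "max (f ((1 - u) *\<^sub>R x + u *\<^sub>R y)) (g ((1 - u) *\<^sub>R x + u *\<^sub>R y))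
      \<le> (1 - u) * max (f x) (g x) + u * max (f y) (g y)"
    by linarith
qed

lemma convex_on_affine_real: "convex S \<Longrightarrow> convex_on S (\<lambda>t::real. a * t + b)"
  by (rule convex_onI) (simp_all add: algebra_simps)

lemma convex_on_hinge:
  assumes "convex S" "k \<ge> 0"
  shows "convex_on S (hinge c s k)"
proof -
  have "convex_on S (\<lambda>t. max (1 * t + -1) (0 * t + 0))"
    using assms(1) by (intro convex_on_max convex_on_affine_real)
  then have "convex_on S (\<lambda>t. (s * t + (c - s)) + k * max (t - 1) 0)"
    using assms by (intro convex_on_add convex_on_cmul convex_on_affine_real) simp_all
  then show ?thesis
    unfolding hinge_def by (simp add: algebra_simps)
qed

lemma pw_affine_slopes_on_hinge:
  assumes "add_subgroup H" "s \<in> H" "k \<in> H"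
  shows "pw_affine_slopes_on H a b (hinge c s k)"
  unfolding pw_affine_slopes_on_def
proof (intro exI[of _ "{1}"] conjI allI impI)
  have "s + k \<in> H" using assms unfolding add_subgroup_def by blast
  fix x y :: real assume "a \<le> x \<and> x < y \<and> y \<le> b \<and> {x<..<y} \<inter> {1} = {}"
  then have "y \<le> 1 \<or> 1 \<le> x" by auto
  then show "\<exists>s'\<in>H. \<exists>c'. \<forall>t\<in>{x..y}. hinge c s k t = s' * t + c'"
    using \<open>s \<in> H\<close> \<open>s + k \<in> H\<close> hinge_left hinge_right by fastforce
qed simp

lemma PL_convex_fun_hinge:
  assumes "add_subgroup H" "s \<in> H" "k \<in> H" "k \<ge> 0"
  shows "PL_convex_fun H (\<lambda>t. ereal (hinge c s k t))"
proof -
  have "continuous_on {1-1..1+1} (hinge c s k)"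
    unfolding hinge_def by (intro continuous_intros)
  then show ?thesis
    unfolding PL_convex_fun_def
    using assms pw_affine_slopes_on_hinge convex_on_hinge[OF convex_real_interval(5)]
    by (intro exI[of _ 1]) (auto intro!: exI[of _ "hinge c s k"])
qed

text \<open>Closed pieces on both sides of \<open>1\<close> share the value at \<open>1\<close>, so no continuity is needed.\<close>
lemma pw_affine_slopes_on_hinge_near_1:
  assumes H: "add_subgroup H" and "e > 0" and g: "pw_affine_slopes_on H (1-e) (1+e) g"
  obtains r c s k where "r > 0" "s \<in> H" "k \<in> H" "\<forall>t\<in>{1-r..1+r}. g t = hinge c s k t"
proof -
  obtain S where S: "finite S" "\<And>x y. 1-e \<le> x \<Longrightarrow> x < y \<Longrightarrow> y \<le> 1+e \<Longrightarrow> {x<..<y} \<inter> S = {} \<Longrightarrow>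
      \<exists>s\<in>H. \<exists>c. \<forall>t\<in>{x..y}. g t = s * t + c"
    using g unfolding pw_affine_slopes_on_def by blast
  obtain \<delta> where \<delta>: "\<delta> > 0" "\<forall>x\<in>S. x \<noteq> 1 \<longrightarrow> \<delta> \<le> dist 1 x"
    using finite_set_avoid[OF S(1), of 1] by blast
  define r where "r = min e \<delta>"
  have r: "r > 0" "r \<le> e" "r \<le> \<delta>" using \<open>e > 0\<close> \<delta> unfolding r_def by auto
  have "{1-r<..<1} \<inter> S = {}" "{1<..<1+r} \<inter> S = {}"
    using \<delta>(2) r by (force simp: dist_real_def)+
  then obtain s1 c1 s2 c2 where s: "s1 \<in> H" "s2 \<in> H"
    and left: "\<forall>t\<in>{1-r..1}. g t = s1 * t + c1" and right: "\<forall>t\<in>{1..1+r}. g t = s2 * t + c2"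
    using S(2)[of "1-r" 1] S(2)[of 1 "1+r"] r by auto
  have "g 1 = s1 + c1" "g 1 = s2 + c2"
    using left[rule_format, of 1] right[rule_format, of 1] r by auto
  have "\<forall>t\<in>{1-r..1+r}. g t = hinge (g 1) s1 (s2 - s1) t"
  proof
    fix t assume "t \<in> {1-r..1+r}"
    then show "g t = hinge (g 1) s1 (s2 - s1) t"
      using left right \<open>g 1 = s1 + c1\<close> \<open>g 1 = s2 + c2\<close>
      by (cases "t \<le> 1") (auto simp: hinge_def algebra_simps)
  qed
  then show thesis
    using that[OF r(1) s(1) add_subgroup_diff[OF H s(2) s(1)]] by blast
qed

definition frac_eval :: "(real \<Rightarrow> ereal) \<times> (real \<Rightarrow> ereal) \<Rightarrow> real \<Rightarrow> ereal" where
  "frac_eval p t = fst p t - snd p t"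

lemma PL_fun_if_PL_convex_fun: "PL_convex_fun H f \<Longrightarrow> PL_fun H f"
  unfolding PL_convex_fun_def PL_fun_def by blast

lemma PL_fun_eventually_not_PInf:
  assumes "PL_fun H f"
  shows "eventually (\<lambda>t. f t \<noteq> \<infinity>) (nhds 1)"
proof -
  obtain e where "e > 0" "\<forall>t\<in>{1-e..1+e}. f t \<noteq> \<infinity>"
    using assms unfolding PL_fun_def by fastforce
  then show ?thesis by (rule eventually_nhds_real_Icc)
qed

lemma PL_fun_nonzero_real:
  assumes "PL_fun H f" "\<not> germ_eq f germ_zero"
  obtains e g where "e > 0" "pw_affine_slopes_on H (1-e) (1+e) g" "continuous_on {1-e..1+e} g"
    "\<forall>t\<in>{1-e..1+e}. f t = ereal (g t)"
proof -
  obtain e where e: "e > 0" and d: "(\<forall>t\<in>{1-e..1+e}. f t = -\<infinity>) \<or>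
      (\<exists>g. pw_affine_slopes_on H (1-e) (1+e) g \<and> continuous_on {1-e..1+e} g \<and>
           (\<forall>t\<in>{1-e..1+e}. f t = ereal (g t)))"
    using assms(1) unfolding PL_fun_def by blast
  have "\<not> (\<forall>t\<in>{1-e..1+e}. f t = -\<infinity>)"
    using assms(2) eventually_nhds_real_Icc[OF e] unfolding germ_eq_def germ_zero_def by blast
  then show thesis using d e that by blast
qed

lemma PL_fun_nonzero_eventually_finite:
  assumes "PL_fun H f" "\<not> germ_eq f germ_zero"
  shows "eventually (\<lambda>t. \<bar>f t\<bar> \<noteq> \<infinity>) (nhds 1)"
proof -
  obtain e g where "e > 0" "\<forall>t\<in>{1-e..1+e}. f t = ereal (g t)"
    using PL_fun_nonzero_real[OF assms] by blast
  then show ?thesis by (intro eventually_nhds_real_Icc) auto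
qed

lemma PL_fun_diff:
  assumes H: "add_subgroup H" and a: "PL_fun H a" and b: "PL_fun H b" "\<not> germ_eq b germ_zero"
  shows "PL_fun H (\<lambda>t. a t - b t)"
proof -
  obtain eb gb where eb: "eb > 0" "pw_affine_slopes_on H (1-eb) (1+eb) gb"
    "continuous_on {1-eb..1+eb} gb" "\<forall>t\<in>{1-eb..1+eb}. b t = ereal (gb t)"
    using PL_fun_nonzero_real[OF b] by blast
  obtain ea where ea: "ea > 0" and d: "(\<forall>t\<in>{1-ea..1+ea}. a t = -\<infinity>) \<or>
      (\<exists>g. pw_affine_slopes_on H (1-ea) (1+ea) g \<and> continuous_on {1-ea..1+ea} g \<and>
           (\<forall>t\<in>{1-ea..1+ea}. a t = ereal (g t)))"
    using a unfolding PL_fun_def by blast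
  define e where "e = min ea eb"
  have e: "e > 0" and sub: "{1-e..1+e} \<subseteq> {1-ea..1+ea}" "{1-e..1+e} \<subseteq> {1-eb..1+eb}"
    using ea eb unfolding e_def by auto
  show ?thesis using d
  proof
    assume "\<forall>t\<in>{1-ea..1+ea}. a t = -\<infinity>"
    then have "\<forall>t\<in>{1-e..1+e}. a t - b t = -\<infinity>" using sub eb(4) by fastforce
    then show ?thesis unfolding PL_fun_def using e by blast
  next
    assume "\<exists>g. pw_affine_slopes_on H (1-ea) (1+ea) g \<and> continuous_on {1-ea..1+ea} g \<and>
           (\<forall>t\<in>{1-ea..1+ea}. a t = ereal (g t))"
    then obtain ga where ga: "pw_affine_slopes_on H (1-ea) (1+ea) ga"
      "continuous_on {1-ea..1+ea} ga" "\<forall>t\<in>{1-ea..1+ea}. a t = ereal (ga t)" by blast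
    have "pw_affine_slopes_on H (1-e) (1+e) (\<lambda>t. ga t - gb t)"
      using e_def by (intro pw_affine_slopes_on_diff[OF H]
          pw_affine_slopes_on_subinterval[OF ga(1)] pw_affine_slopes_on_subinterval[OF eb(2)]) auto
    moreover have "continuous_on {1-e..1+e} (\<lambda>t. ga t - gb t)"
      using continuous_on_subset[OF ga(2) sub(1)] continuous_on_subset[OF eb(3) sub(2)]
      by (intro continuous_on_diff)
    moreover have "\<forall>t\<in>{1-e..1+e}. a t - b t = ereal (ga t - gb t)" using ga(3) eb(4) sub by auto
    ultimately show ?thesis unfolding PL_fun_def using e by blast
  qed
qed

lemma hinge_fraction_in_frac_carrier:
  assumes H: "add_subgroup H" and "s \<in> H" "k \<in> H" "k \<ge> 0" "k' \<in> H" "k' \<ge> 0"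
  shows "((\<lambda>t. ereal (hinge c s k t)), (\<lambda>t. ereal (hinge 0 0 k' t))) \<in> frac_carrier (PL_convex_fun H)"
proof -
  have "0 \<in> H" using H unfolding add_subgroup_def by blast
  then show ?thesis
    unfolding frac_carrier_def mem_Collect_eq case_prod_conv
    using assms PL_convex_fun_hinge[OF H] not_germ_eq_ereal_zero by blast
qed

lemma frac_eval_hinge_fraction:
  "frac_eval ((\<lambda>t. ereal (hinge c s (max k 0) t)), (\<lambda>t. ereal (hinge 0 0 (max (- k) 0) t))) t
     = ereal (hinge c s k t)"
  unfolding frac_eval_def using hinge_split[of c s k t] by simp

lemma PL_fun_germ_eq_frac_eval:
  assumes H: "add_subgroup H" and f: "PL_fun H f"
  obtains p where "p \<in> frac_carrier (PL_convex_fun H)" "germ_eq (frac_eval p) f"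
proof -
  obtain e where e: "e > 0" and d: "(\<forall>t\<in>{1-e..1+e}. f t = -\<infinity>) \<or>
      (\<exists>g. pw_affine_slopes_on H (1-e) (1+e) g \<and> continuous_on {1-e..1+e} g \<and>
           (\<forall>t\<in>{1-e..1+e}. f t = ereal (g t)))"
    using f unfolding PL_fun_def by blast
  from d show thesis
  proof
    assume f_bot: "\<forall>t\<in>{1-e..1+e}. f t = -\<infinity>"
    define p where "p = ((\<lambda>_::real. -\<infinity>::ereal), (\<lambda>t. ereal (hinge 0 0 0 t)))"
    have "0 \<in> H" using H unfolding add_subgroup_def by blast
    have "PL_convex_fun H (\<lambda>_. -\<infinity>)"
      unfolding PL_convex_fun_def by (intro exI[of _ 1]) auto
    then have "p \<in> frac_carrier (PL_convex_fun H)"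
      using PL_convex_fun_hinge[OF H \<open>0 \<in> H\<close> \<open>0 \<in> H\<close>] not_germ_eq_ereal_zero
      unfolding p_def frac_carrier_def mem_Collect_eq case_prod_conv by blast
    moreover have "germ_eq (frac_eval p) f"
      unfolding germ_eq_def frac_eval_def p_def using f_bot by (intro eventually_nhds_real_Icc[OF e]) auto
    ultimately show thesis by (rule that)
  next
    assume "\<exists>g. pw_affine_slopes_on H (1-e) (1+e) g \<and> continuous_on {1-e..1+e} g \<and>
           (\<forall>t\<in>{1-e..1+e}. f t = ereal (g t))"
    then obtain g where g: "pw_affine_slopes_on H (1-e) (1+e) g" "\<forall>t\<in>{1-e..1+e}. f t = ereal (g t)"
      by blast
    obtain r c s k where r: "r > 0" "s \<in> H" "k \<in> H" "\<forall>t\<in>{1-r..1+r}. g t = hinge c s k t"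
      by (rule pw_affine_slopes_on_hinge_near_1[OF H e g(1)])
    define p where "p = ((\<lambda>t. ereal (hinge c s (max k 0) t)), (\<lambda>t. ereal (hinge 0 0 (max (- k) 0) t)))"
    have "- k \<in> H" using H r(3) unfolding add_subgroup_def by blast
    then have "p \<in> frac_carrier (PL_convex_fun H)"
      unfolding p_def using r add_subgroup_max_zero[OF H] by (intro hinge_fraction_in_frac_carrier[OF H]) auto
    moreover have "f t = frac_eval p t" if "t \<in> {1 - min e r..1 + min e r}" for t
    proof -
      have "t \<in> {1-e..1+e}" "t \<in> {1-r..1+r}" using that by auto
      then show ?thesis using g(2) r(4) unfolding p_def frac_eval_hinge_fraction by simp
    qed
    then have "germ_eq (frac_eval p) f"
      unfolding germ_eq_def using e r by (intro eventually_nhds_real_Icc[of "min e r"]) auto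
    ultimately show thesis by (rule that)
  qed
qed

lemma mult_cancellative_PL_convex_fun: "mult_cancellative (PL_convex_fun H)"
  unfolding mult_cancellative_def
proof (intro allI impI)
  fix f g h assume h: "PL_convex_fun H h" "\<not> germ_eq h germ_zero"
    and fh_gh: "germ_eq (germ_mult f h) (germ_mult g h)"
  from fh_gh have "eventually (\<lambda>t. f t + h t = g t + h t) (nhds 1)"
    unfolding germ_eq_def germ_mult_def .
  moreover have "eventually (\<lambda>t. \<bar>h t\<bar> \<noteq> \<infinity>) (nhds 1)"
    using PL_fun_nonzero_eventually_finite[OF PL_fun_if_PL_convex_fun] h by blast
  ultimately show "germ_eq f g"
    unfolding germ_eq_def by eventually_elim (auto simp: ereal_add_cancel_right)
qed

lemma frac_carrier_PL_convex_funD: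
  assumes "p \<in> frac_carrier (PL_convex_fun H)"
  shows "PL_fun H (fst p)" "PL_fun H (snd p)" "\<not> germ_eq (snd p) germ_zero"
  using assms unfolding frac_carrier_def by (auto dest: PL_fun_if_PL_convex_fun)

lemma frac_carrier_PL_convex_fun_eventually:
  assumes "p \<in> frac_carrier (PL_convex_fun H)"
  shows "eventually (\<lambda>t. fst p t \<noteq> \<infinity> \<and> \<bar>snd p t\<bar> \<noteq> \<infinity>) (nhds 1)"
  using frac_carrier_PL_convex_funD[OF assms]
  by (intro eventually_conj PL_fun_eventually_not_PInf PL_fun_nonzero_eventually_finite)

lemma frac_iso_frac_eval:
  assumes H: "add_subgroup H"
  shows "frac_iso (PL_convex_fun H) (PL_fun H) frac_eval"
  unfolding frac_iso_def
proof (intro conjI ballI allI impI)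
  fix p assume p: "p \<in> frac_carrier (PL_convex_fun H)"
  show "PL_fun H (frac_eval p)"
    unfolding frac_eval_def using frac_carrier_PL_convex_funD[OF p] by (rule PL_fun_diff[OF H])
next
  fix f assume "PL_fun H f"
  then obtain p where "p \<in> frac_carrier (PL_convex_fun H)" "germ_eq (frac_eval p) f"
    by (rule PL_fun_germ_eq_frac_eval[OF H])
  then show "\<exists>p\<in>frac_carrier (PL_convex_fun H). germ_eq (frac_eval p) f" by blast
next
  fix p q assume p: "p \<in> frac_carrier (PL_convex_fun H)" and q: "q \<in> frac_carrier (PL_convex_fun H)"
  note fin = eventually_conj[OF frac_carrier_PL_convex_fun_eventually[OF p]
      frac_carrier_PL_convex_fun_eventually[OF q]]
  have "eventually (\<lambda>t. frac_eval p t = frac_eval q t \<longleftrightarrow>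
      fst p t + snd q t = fst q t + snd p t) (nhds 1)"
    using fin by eventually_elim (simp add: frac_eval_def ereal_diff_eq_diff_iff)
  then show "germ_eq (frac_eval p) (frac_eval q) \<longleftrightarrow> frac_eq p q"
    unfolding germ_eq_def frac_eq_def germ_mult_def by (rule eventually_subst)
  show "germ_eq (frac_eval (frac_add p q)) (germ_add (frac_eval p) (frac_eval q))"
    unfolding germ_eq_def using fin
    by eventually_elim (simp add: frac_eval_def frac_add_def germ_add_def germ_mult_def ereal_max_add_diff)
  show "germ_eq (frac_eval (frac_mult p q)) (germ_mult (frac_eval p) (frac_eval q))"
    unfolding germ_eq_def using fin
    by eventually_elim (simp add: frac_eval_def frac_mult_def germ_mult_def ereal_add_diff_add)
qed

theorem proposition4p5:
  fixes H :: "real set"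
  assumes "rank_one_subgroup H"
  shows "mult_cancellative (PL_convex_fun H) \<and>
         (\<exists>\<phi>. frac_iso (PL_convex_fun H) (PL_fun H) \<phi>)"
proof -
  have "add_subgroup H" using assms unfolding rank_one_subgroup_def by blast
  then show ?thesis using mult_cancellative_PL_convex_fun frac_iso_frac_eval by blast
qed

end
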